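(* Consider the following edge-labeled graph (the "3-color gadget") with three categories red, blue, green: node set $\{u,v,a,b,c,d\}$ and six edges forming a cycle, namely $\{u,c\}$ labeled blue, $\{c,d\}$ labeled green, $\{d,v\}$ labeled red, $\{v,b\}$ labeled blue, $\{b,a\}$ labeled green, $\{a,u\}$ labeled red. Then the minimum of $\mathrm{CatEdgeClus}(Y)$ over all assignments $Y:\{u,v,a,b,c,d\}\to\{\text{red},\text{blue},\text{green}\}$ equals $3$, and every assignment $Y$ with $\mathrm{CatEdgeClus}(Y)=3$ satisfies $\{Y[u],Y[v]\}=\{\text{red},\text{blue}\}$ (one of $u,v$ is red and the other is blue).
   Context: For an edge-labeled graph with node set $V$, edge collection $E$, categories $C$ and labeling $\ell:E\to C$, and a clustering (node coloring) $Y:V\to C$, an edge $e$ is a mistake ($m_Y(e)=1$) if some endpoint $i\in e$ has $Y[i]\neq\ell(e)$, and $m_Y(e)=0$ otherwise; $\mathrm{CatEdgeClus}(Y)=\sum_{e\in E}m_Y(e)$ is the number of mistakes. *)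

theory Defs
  imports Main
begin

definition mistake :: "('v \<Rightarrow> 'c) \<Rightarrow> ('v set \<Rightarrow> 'c) \<Rightarrow> 'v set \<Rightarrow> nat" where
  "mistake Y lbl e = (if \<exists>i\<in>e. Y i \<noteq> lbl e then 1 else 0)"

definition CatEdgeClus :: "'v set set \<Rightarrow> ('v set \<Rightarrow> 'c) \<Rightarrow> ('v \<Rightarrow> 'c) \<Rightarrow> nat" where
  "CatEdgeClus E lbl Y = (\<Sum>e\<in>E. mistake Y lbl e)"

datatype node = U | V | A | B | C | D
datatype color = Red | Blue | Green

definition gadget_edges :: "node set set" where
  "gadget_edges = {{U, C}, {C, D}, {D, V}, {V, B}, {B, A}, {A, U}}"

definition gadget_label :: "node set \<Rightarrow> color" where
  "gadget_label e =
     (if e = {U, C} then Blue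
      else if e = {C, D} then Green
      else if e = {D, V} then Red
      else if e = {V, B} then Blue
      else if e = {B, A} then Green
      else Red)"

end

theory Submission
  imports Defs
begin

text \<open>The six edges form the cycle U-C-D-V-B-A-U, and the two edges at every node carry
  different labels, so no two adjacent edges can both be correct. Among six edges of a cycle,
  the three pairs of a perfect matching of consecutive edges each contain a mistake, so there
  are at least three mistakes. With exactly three, every pair of consecutive edges contains
  exactly one mistake, so the correct edges alternate around the cycle: either U-C and D-V are
  correct (U blue, V red) or V-B and A-U are (V blue, U red).\<close>

lemma mistake_eq_0_iff: "mistake Y lbl e = 0 \<longleftrightarrow> (\<forall>i\<in>e. Y i = lbl e)"
  by (auto simp: mistake_def)

lemma mistake_adjacent:
  assumes "i \<in> e" "i \<in> e'" "lbl e \<noteq> lbl e'"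
  shows "1 \<le> mistake Y lbl e + mistake Y lbl e'"
  using assms unfolding mistake_def by (auto intro: bexI[of _ i])

lemma gadget_label_simps:
  "gadget_label {U, C} = Blue" "gadget_label {C, D} = Green" "gadget_label {D, V} = Red"
  "gadget_label {V, B} = Blue" "gadget_label {B, A} = Green" "gadget_label {A, U} = Red"
  by (simp_all add: gadget_label_def doubleton_eq_iff)

lemma CatEdgeClus_gadget:
  "CatEdgeClus gadget_edges gadget_label Y =
     mistake Y gadget_label {U, C} + mistake Y gadget_label {C, D}
   + mistake Y gadget_label {D, V} + mistake Y gadget_label {V, B}
   + mistake Y gadget_label {B, A} + mistake Y gadget_label {A, U}"
  unfolding CatEdgeClus_def gadget_edges_def by (simp add: doubleton_eq_iff)

lemma gadget_adjacent_mistakes: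
  fixes Y :: "node \<Rightarrow> color"
  defines "m \<equiv> \<lambda>e. mistake Y gadget_label e"
  shows "1 \<le> m {U, C} + m {C, D}" "1 \<le> m {C, D} + m {D, V}" "1 \<le> m {D, V} + m {V, B}"
    "1 \<le> m {V, B} + m {B, A}" "1 \<le> m {B, A} + m {A, U}" "1 \<le> m {A, U} + m {U, C}"
  unfolding m_def
  by (rule mistake_adjacent[where i = C] mistake_adjacent[where i = D] mistake_adjacent[where i = V]
      mistake_adjacent[where i = B] mistake_adjacent[where i = A] mistake_adjacent[where i = U];
      simp add: gadget_label_simps)+

lemma CatEdgeClus_gadget_ge_3: "3 \<le> CatEdgeClus gadget_edges gadget_label Y"
  using gadget_adjacent_mistakes[of Y] unfolding CatEdgeClus_gadget by linarith

lemma CatEdgeClus_gadget_eq_3_ends: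
  assumes "CatEdgeClus gadget_edges gadget_label Y = 3"
  shows "{Y U, Y V} = {Red, Blue}"
proof -
  let ?m = "\<lambda>e. mistake Y gadget_label e"
  have "?m {U, C} = 0 \<and> ?m {D, V} = 0 \<or> ?m {V, B} = 0 \<and> ?m {A, U} = 0"
    using assms gadget_adjacent_mistakes[of Y] unfolding CatEdgeClus_gadget by linarith
  then show ?thesis
    by (auto simp: mistake_eq_0_iff gadget_label_simps)
qed

lemma CatEdgeClus_gadget_attains_3:
  "CatEdgeClus gadget_edges gadget_label
     (\<lambda>x. case x of U \<Rightarrow> Red | A \<Rightarrow> Red | C \<Rightarrow> Green | D \<Rightarrow> Green | _ \<Rightarrow> Blue) = 3"
  unfolding CatEdgeClus_gadget by (simp add: mistake_def gadget_label_simps)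

theorem mainTheorem3:
  shows "(LEAST k. \<exists>Y :: node \<Rightarrow> color. CatEdgeClus gadget_edges gadget_label Y = k) = 3
       \<and> (\<forall>Y :: node \<Rightarrow> color. CatEdgeClus gadget_edges gadget_label Y = 3 \<longrightarrow>
            {Y U, Y V} = {Red, Blue})"
proof
  show "(LEAST k. \<exists>Y :: node \<Rightarrow> color. CatEdgeClus gadget_edges gadget_label Y = k) = 3"
  proof (rule Least_equality)
    show "\<exists>Y :: node \<Rightarrow> color. CatEdgeClus gadget_edges gadget_label Y = 3"
      using CatEdgeClus_gadget_attains_3 by blast
  qed (use CatEdgeClus_gadget_ge_3 in blast)
  show "\<forall>Y :: node \<Rightarrow> color. CatEdgeClus gadget_edges gadget_label Y = 3 \<longrightarrow>
          {Y U, Y V} = {Red, Blue}"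
    using CatEdgeClus_gadget_eq_3_ends by blast
qed

end
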